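(* For every set $S\subseteq V$ of vaccinated nodes, the expected total reward equals $$r(S)=\sum_{i\in S}\Big|N_i\setminus \bigcup_{j\in N_i\cap S}N_j\Big|\,\mathbb{P}\{Z_i>\tau\}=\sum_{i\in S}\Big(n_i-\Big|\bigcup_{j\in N_i\cap S}N_j\Big|\Big)\mathbb{P}\{Z_i>\tau\}.$$
   Context: Let $G=(V,E)$ be a finite tree with $|V|=n$, rooted at a node $s$ (the infection source). For a node $i$: $d_i$ is its depth (number of edges on the path from $s$ to $i$); $A_i$ is the set of ancestors of $i$ (strict, including its parent); $N_i$ is the set of descendants of $i$ (strict, not including $i$); $n_i=|N_i|$. Each edge $e$ carries an independent random variable $X_e\sim\mathrm{Exp}(\lambda)$ with $\lambda>0$, and $Z_i=\sum_{e \text{ on the path from } s \text{ to } i}X_e$ is the infection time of $i$ (so $Z_s=0$; $Z_i$ is a sum of $d_i$ i.i.d. $\mathrm{Exp}(\lambda)$ variables). The immunization time $\tau\ge 0$ is a single random variable, common to all vaccinated nodes and independent of $(X_e)_{e\in E}$. For $S\subseteq V$ (the vaccinated set), a node $i\in S$ becomes immune iff $Z_i>\tau$, and an immune node saves all its descendants. The expected total reward is defined as $r(S)=\mathbb{E}\big[\,\big|\bigcup_{i\in S:\,Z_i>\tau}N_i\big|\,\big]$, the expected number of nodes that are descendants of at least one immune vaccinated node. *)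

theory Defs
  imports "HOL-Probability.Probability"
begin

text \<open>The edges are the pairs (par v, v) for v in V - {s}; each such edge is identified
  with its child endpoint v.\<close>
definition is_rooted_tree :: "'a set \<Rightarrow> 'a \<Rightarrow> ('a \<Rightarrow> 'a) \<Rightarrow> bool" where
  "is_rooted_tree V s par \<longleftrightarrow> finite V \<and> s \<in> V \<and> (\<forall>v\<in>V - {s}. par v \<in> V)
     \<and> (\<forall>v\<in>V. \<exists>k. (par ^^ k) v = s)"

definition depth :: "'a \<Rightarrow> ('a \<Rightarrow> 'a) \<Rightarrow> 'a \<Rightarrow> nat" where
  "depth s par i = (LEAST k. (par ^^ k) i = s)"

definition ancestors :: "'a \<Rightarrow> ('a \<Rightarrow> 'a) \<Rightarrow> 'a \<Rightarrow> 'a set" where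
  "ancestors s par i = {(par ^^ k) i | k. 0 < k \<and> k \<le> depth s par i}"

definition descendants :: "'a set \<Rightarrow> 'a \<Rightarrow> ('a \<Rightarrow> 'a) \<Rightarrow> 'a \<Rightarrow> 'a set" where
  "descendants V s par i = {j \<in> V. i \<in> ancestors s par j}"

definition infection_time :: "'a \<Rightarrow> ('a \<Rightarrow> 'a) \<Rightarrow> ('a \<Rightarrow> 'w \<Rightarrow> real) \<Rightarrow> 'a \<Rightarrow> 'w \<Rightarrow> real" where
  "infection_time s par X i \<omega> = (\<Sum>k < depth s par i. X ((par ^^ k) i) \<omega>)"

end

theory Submission
  imports Defs
begin

text \<open>For a fixed outcome, let T be the set of vaccinated nodes that become immune. Because
  edge delays are nonnegative, infection times grow along root-to-leaf paths, so T is closed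
  under passing to vaccinated descendants. For such T the union of the subtrees below T splits
  disjointly into the private descendant sets, N_i minus the union of N_j over the vaccinated
  descendants j of i, for i in T: a saved node is charged to its deepest vaccinated ancestor.
  The saved count is therefore a weighted sum of the indicators of the events Z_i > tau, whose
  expectation is the claim.\<close>

lemma real_card_eq_sum_indicator:
  "finite A \<Longrightarrow> real (card (A \<inter> B)) = (\<Sum>x\<in>A. indicator B x)"
  by (simp flip: sum_indicator_eq_card add: of_nat_sum real_of_nat_indicator)

lemma borel_measurable_card_UN_events:
  assumes "finite V" "finite I" "\<And>i. i \<in> I \<Longrightarrow> A i \<subseteq> V" "\<And>i. i \<in> I \<Longrightarrow> E i \<in> sets M"
  shows "(\<lambda>x. real (card (\<Union>i\<in>{i \<in> I. x \<in> E i}. A i))) \<in> borel_measurable M"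
proof -
  have card_eq: "real (card (\<Union>i\<in>{i \<in> I. x \<in> E i}. A i))
      = (\<Sum>k\<in>V. indicator (\<Union>i\<in>{i \<in> I. k \<in> A i}. E i) x)" for x
  proof -
    let ?U = "\<Union>i\<in>{i \<in> I. x \<in> E i}. A i"
    have "?U = V \<inter> ?U"
      using assms(3) by blast
    then have "real (card ?U) = (\<Sum>k\<in>V. indicator ?U k)"
      using real_card_eq_sum_indicator[OF assms(1), of ?U] by simp
    also have "\<dots> = (\<Sum>k\<in>V. indicator (\<Union>i\<in>{i \<in> I. k \<in> A i}. E i) x)"
      by (intro sum.cong) (auto simp: indicator_def)
    finally show ?thesis .
  qed
  show ?thesis
    unfolding card_eq using assms(2,4)
    by (intro borel_measurable_sum borel_measurable_indicator sets.finite_UN) auto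
qed

lemma (in finite_measure) integral_sum_indicator:
  fixes c :: "'i \<Rightarrow> real"
  assumes "finite I" "\<And>i. i \<in> I \<Longrightarrow> E i \<in> sets M"
  shows "(\<integral>x. (\<Sum>i\<in>I. c i * indicator (E i) x) \<partial>M) = (\<Sum>i\<in>I. c i * measure M (E i))"
proof -
  have "integrable M (\<lambda>x. c i * indicator (E i) x)" if "i \<in> I" for i
    using assms(2)[OF that]
    by (intro integrable_mult_right integrable_real_indicator) (auto simp: less_top[symmetric])
  then show ?thesis
    using assms by (subst Bochner_Integration.integral_sum) auto
qed

lemma (in prob_space) exponential_distributed_pos_AE:
  assumes "distributed M lborel X (exponential_density l)" "0 < l"
  shows "AE x in M. 0 < X x"
proof -
  have "\<P>(x in M. X x \<le> 0) = 0"
    using exponential_distributedD_le[OF assms(1) order_refl assms(2)] by simp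
  moreover have "{x \<in> space M. X x \<le> 0} \<in> events"
    using distributed_measurable[OF assms(1)] by measurable
  ultimately have "AE x in M. \<not> X x \<le> 0"
    using prob_Collect_eq_0[of "\<lambda>x. X x \<le> 0"] by blast
  then show ?thesis by eventually_elim simp
qed

locale rooted_tree =
  fixes V :: "'a set" and s :: 'a and par :: "'a \<Rightarrow> 'a"
  assumes rooted_tree: "is_rooted_tree V s par"
begin

abbreviation d :: "'a \<Rightarrow> nat" where "d \<equiv> depth s par"
abbreviation N :: "'a \<Rightarrow> 'a set" where "N \<equiv> descendants V s par"

lemma finite_V: "finite V"
  and par_in_V: "v \<in> V - {s} \<Longrightarrow> par v \<in> V"
  and reaches_root: "v \<in> V \<Longrightarrow> \<exists>k. (par ^^ k) v = s"
  using rooted_tree unfolding is_rooted_tree_def by auto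

lemma funpow_par_depth: "v \<in> V \<Longrightarrow> (par ^^ d v) v = s"
  unfolding depth_def using reaches_root by (metis (mono_tags, lifting) LeastI_ex)

lemma funpow_par_neq_root: "k < d v \<Longrightarrow> (par ^^ k) v \<noteq> s"
  unfolding depth_def using not_less_Least by blast

lemma funpow_par_in_V: "v \<in> V \<Longrightarrow> k \<le> d v \<Longrightarrow> (par ^^ k) v \<in> V"
proof (induction k)
  case (Suc k)
  then have "(par ^^ k) v \<in> V - {s}"
    using funpow_par_neq_root[of k v] by auto
  then show ?case using par_in_V by simp
qed simp

lemma depth_funpow_par:
  assumes "v \<in> V" "k \<le> d v"
  shows "d ((par ^^ k) v) = d v - k"
proof -
  have "(par ^^ (d v - k)) ((par ^^ k) v) = (par ^^ (d v - k + k)) v"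
    by (simp add: funpow_add)
  also have "\<dots> = s" using assms funpow_par_depth by simp
  finally have up: "(par ^^ (d v - k)) ((par ^^ k) v) = s" .
  then have "d ((par ^^ k) v) \<le> d v - k"
    unfolding depth_def by (rule Least_le)
  moreover have "(par ^^ (d ((par ^^ k) v) + k)) v = s"
    using LeastI[of "\<lambda>n. (par ^^ n) ((par ^^ k) v) = s", OF up]
    by (simp add: funpow_add depth_def)
  then have "d v \<le> d ((par ^^ k) v) + k"
    unfolding depth_def by (rule Least_le)
  ultimately show ?thesis by simp
qed

lemma mem_descendants_iff:
  "j \<in> N i \<longleftrightarrow> j \<in> V \<and> (\<exists>k. 0 < k \<and> k \<le> d j \<and> (par ^^ k) j = i)"
  unfolding descendants_def ancestors_def by auto

lemma descendants_subset_V: "N i \<subseteq> V"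
  unfolding descendants_def by auto

lemma finite_descendants: "finite (N i)"
  using finite_V descendants_subset_V by (rule finite_subset[rotated])

lemma depth_less_descendant: "j \<in> N i \<Longrightarrow> d i < d j"
  using depth_funpow_par by (auto simp: mem_descendants_iff)

lemma descendants_trans: "j \<in> N i \<Longrightarrow> i \<in> N h \<Longrightarrow> j \<in> N h"
proof -
  assume "j \<in> N i" "i \<in> N h"
  then obtain a b where a: "j \<in> V" "0 < a" "a \<le> d j" "(par ^^ a) j = i"
    and b: "0 < b" "b \<le> d i" "(par ^^ b) i = h"
    by (auto simp: mem_descendants_iff)
  have "d i = d j - a" using depth_funpow_par a by blast
  moreover have "(par ^^ (b + a)) j = h" using a b by (simp add: funpow_add)
  ultimately show "j \<in> N h"
    using a b by (auto simp: mem_descendants_iff intro!: exI[of _ "b + a"])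
qed

text \<open>Two ancestors of the same node lie on its path to the root, hence are comparable.\<close>
lemma descendants_comparable:
  assumes "k \<in> N i" "k \<in> N j" "i \<noteq> j"
  shows "i \<in> N j \<or> j \<in> N i"
proof -
  obtain a b where k: "k \<in> V" and a: "0 < a" "a \<le> d k" "(par ^^ a) k = i"
    and b: "0 < b" "b \<le> d k" "(par ^^ b) k = j"
    using assms(1,2) by (auto simp: mem_descendants_iff)
  have lower_in: "(par ^^ p) k \<in> N ((par ^^ q) k)" if "0 < p" "p < q" "q \<le> d k" for p q
  proof -
    have "(par ^^ (q - p)) ((par ^^ p) k) = (par ^^ (q - p + p)) k"
      by (simp add: funpow_add)
    then have "(par ^^ (q - p)) ((par ^^ p) k) = (par ^^ q) k"
      using that by simp
    moreover have "d ((par ^^ p) k) = d k - p" "(par ^^ p) k \<in> V"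
      using depth_funpow_par funpow_par_in_V k that by auto
    ultimately show ?thesis
      using that by (auto simp: mem_descendants_iff intro!: exI[of _ "q - p"])
  qed
  have "a \<noteq> b" using a(3) b(3) assms(3) by auto
  then have "a < b \<or> b < a" by linarith
  then show ?thesis using lower_in a b by blast
qed

definition private_descendants :: "'a set \<Rightarrow> 'a \<Rightarrow> 'a set" where
  "private_descendants S i = N i - (\<Union>j\<in>N i \<inter> S. N j)"

lemma card_private_descendants:
  "real (card (private_descendants S i)) = real (card (N i)) - real (card (\<Union>j\<in>N i \<inter> S. N j))"
proof -
  have "(\<Union>j\<in>N i \<inter> S. N j) \<subseteq> N i" using descendants_trans by blast
  then show ?thesis
    unfolding private_descendants_def using finite_descendants
    by (simp add: card_Diff_subset card_mono of_nat_diff finite_subset)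
qed

text \<open>Each node below T is charged to its deepest ancestor in T; closedness of T under
  vaccinated descendants makes that ancestor have no vaccinated descendant above the node.\<close>
lemma UN_descendants_eq_UN_private:
  assumes "finite S" "T \<subseteq> S" and closed: "\<And>i j. i \<in> T \<Longrightarrow> j \<in> S \<Longrightarrow> j \<in> N i \<Longrightarrow> j \<in> T"
  shows "(\<Union>i\<in>T. N i) = (\<Union>i\<in>T. private_descendants S i)"
proof
  show "(\<Union>i\<in>T. N i) \<subseteq> (\<Union>i\<in>T. private_descendants S i)"
  proof
    fix k assume "k \<in> (\<Union>i\<in>T. N i)"
    define C where "C = {i \<in> T. k \<in> N i}"
    have "C \<subseteq> S" "C \<noteq> {}"
      using \<open>k \<in> (\<Union>i\<in>T. N i)\<close> assms(2) by (auto simp: C_def)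
    then have "finite C" "C \<noteq> {}"
      using assms(1) finite_subset by auto
    then have "Max (d ` C) \<in> d ` C" by (intro Max_in) auto
    then obtain j where j: "j \<in> C" "d j = Max (d ` C)" by auto
    have deepest: "d j' \<le> d j" if "j' \<in> C" for j'
      using \<open>finite C\<close> that j(2) by simp
    have "k \<notin> N j'" if "j' \<in> N j \<inter> S" for j'
      using that j closed[of j j'] deepest[of j'] depth_less_descendant[of j' j]
      by (auto simp: C_def)
    then show "k \<in> (\<Union>i\<in>T. private_descendants S i)"
      using j by (auto simp: C_def private_descendants_def)
  qed
qed (auto simp: private_descendants_def)

lemma private_descendants_disjoint:
  assumes "i \<in> S" "j \<in> S" "i \<noteq> j"
  shows "private_descendants S i \<inter> private_descendants S j = {}"
proof (rule ccontr)
  assume "private_descendants S i \<inter> private_descendants S j \<noteq> {}"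
  then obtain k where "k \<in> N i" "k \<in> N j"
    and "\<forall>j'\<in>N i \<inter> S. k \<notin> N j'" "\<forall>i'\<in>N j \<inter> S. k \<notin> N i'"
    by (auto simp: private_descendants_def)
  then show False
    using descendants_comparable assms by blast
qed

lemma card_UN_descendants_closed:
  assumes "finite S" "T \<subseteq> S" "\<And>i j. i \<in> T \<Longrightarrow> j \<in> S \<Longrightarrow> j \<in> N i \<Longrightarrow> j \<in> T"
  shows "card (\<Union>i\<in>T. N i) = (\<Sum>i\<in>T. card (private_descendants S i))"
proof -
  have "finite T" using assms(1,2) finite_subset by blast
  have "card (\<Union>i\<in>T. N i) = card (\<Union>i\<in>T. private_descendants S i)"
    using UN_descendants_eq_UN_private[OF assms] by simp
  also have "\<dots> = (\<Sum>i\<in>T. card (private_descendants S i))"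
  proof (rule card_UN_disjoint[OF \<open>finite T\<close>])
    show "\<forall>i\<in>T. finite (private_descendants S i)"
      using finite_descendants by (simp add: private_descendants_def)
    show "\<forall>i\<in>T. \<forall>j\<in>T. i \<noteq> j \<longrightarrow> private_descendants S i \<inter> private_descendants S j = {}"
      using assms(2) private_descendants_disjoint by blast
  qed
  finally show ?thesis .
qed

lemma infection_time_par:
  assumes "j \<in> V - {s}"
  shows "infection_time s par X j \<omega> = X j \<omega> + infection_time s par X (par j) \<omega>"
proof -
  have "j \<in> V" using assms by simp
  have "d j \<noteq> 0"
    using funpow_par_depth[OF \<open>j \<in> V\<close>] assms by (metis DiffE funpow_0 singletonI)
  moreover have "d (par j) = d j - 1"
    using depth_funpow_par[of j 1] \<open>j \<in> V\<close> \<open>d j \<noteq> 0\<close> by simp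
  ultimately have "d j = Suc (d (par j))" by simp
  then show ?thesis
    unfolding infection_time_def \<open>d j = Suc (d (par j))\<close> sum.lessThan_Suc_shift
    by (simp add: funpow_Suc_right del: funpow.simps)
qed

lemma infection_time_le_descendant:
  assumes nonneg: "\<forall>v\<in>V - {s}. 0 \<le> X v \<omega>" and "j \<in> N i"
  shows "infection_time s par X i \<omega> \<le> infection_time s par X j \<omega>"
proof -
  obtain a where j: "j \<in> V" "a \<le> d j" "(par ^^ a) j = i"
    using \<open>j \<in> N i\<close> by (auto simp: mem_descendants_iff)
  have "infection_time s par X ((par ^^ b) j) \<omega> \<le> infection_time s par X j \<omega>" if "b \<le> d j" for b
    using that
  proof (induction b)
    case (Suc b)
    then have "(par ^^ b) j \<in> V - {s}"
      using funpow_par_in_V[OF j(1)] funpow_par_neq_root[of b j] by simp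
    then have "0 \<le> X ((par ^^ b) j) \<omega>" using nonneg by blast
    then show ?case
      using Suc infection_time_par[OF \<open>(par ^^ b) j \<in> V - {s}\<close>, of X \<omega>] by simp
  qed simp
  then show ?thesis using j by blast
qed

lemma borel_measurable_infection_time:
  assumes "\<And>v. v \<in> V - {s} \<Longrightarrow> X v \<in> borel_measurable M" "i \<in> V"
  shows "infection_time s par X i \<in> borel_measurable M"
proof -
  have "(par ^^ k) i \<in> V - {s}" if "k < d i" for k
    using funpow_par_in_V[OF assms(2)] funpow_par_neq_root that by simp
  then show ?thesis
    unfolding infection_time_def[abs_def] using assms(1) by (intro borel_measurable_sum) auto
qed

lemma card_saved_eq_sum_private:
  assumes "S \<subseteq> V" "\<forall>v\<in>V - {s}. 0 \<le> X v \<omega>"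
  shows "real (card (\<Union>i\<in>{i \<in> S. infection_time s par X i \<omega> > t}. N i))
       = (\<Sum>i\<in>S. real (card (private_descendants S i)) * of_bool (infection_time s par X i \<omega> > t))"
proof -
  let ?T = "{i \<in> S. infection_time s par X i \<omega> > t}"
  have "finite S" using assms(1) finite_V finite_subset by blast
  have "card (\<Union>i\<in>?T. N i) = (\<Sum>i\<in>?T. card (private_descendants S i))"
  proof (rule card_UN_descendants_closed[OF \<open>finite S\<close>])
    fix i j assume "i \<in> ?T" "j \<in> S" "j \<in> N i"
    then show "j \<in> ?T"
      using infection_time_le_descendant[of X \<omega> j i] assms(2) by auto
  qed auto
  then show ?thesis
    using \<open>finite S\<close> by (simp add: sum.inter_filter[symmetric] of_bool_def if_distrib cong: if_cong)
qed

lemma expected_saved_eq_sum_private: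
  assumes "finite_measure M" "S \<subseteq> V"
    and X: "\<And>v. v \<in> V - {s} \<Longrightarrow> X v \<in> borel_measurable M"
    and nonneg: "AE \<omega> in M. \<forall>v\<in>V - {s}. 0 \<le> X v \<omega>"
    and tau: "tau \<in> borel_measurable M"
  shows "(\<integral>\<omega>. real (card (\<Union>i\<in>{i \<in> S. infection_time s par X i \<omega> > tau \<omega>}. N i)) \<partial>M)
       = (\<Sum>i\<in>S. real (card (private_descendants S i))
                 * measure M {\<omega> \<in> space M. infection_time s par X i \<omega> > tau \<omega>})"
proof -
  interpret finite_measure M by fact
  define E where "E i = {\<omega> \<in> space M. infection_time s par X i \<omega> > tau \<omega>}" for i
  have E: "E i \<in> sets M" if "i \<in> S" for i
  proof -
    have "i \<in> V" using that assms(2) by blast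
    then show ?thesis
      using borel_measurable_infection_time[OF X] tau unfolding E_def by measurable
  qed
  have "finite S" using assms(2) finite_V finite_subset by blast
  have "(\<integral>\<omega>. real (card (\<Union>i\<in>{i \<in> S. infection_time s par X i \<omega> > tau \<omega>}. N i)) \<partial>M)
      = (\<integral>\<omega>. (\<Sum>i\<in>S. real (card (private_descendants S i)) * indicator (E i) \<omega>) \<partial>M)"
  proof (rule integral_cong_AE)
    have "(\<lambda>\<omega>. real (card (\<Union>i\<in>{i \<in> S. \<omega> \<in> E i}. N i))) \<in> borel_measurable M"
      using finite_V \<open>finite S\<close> descendants_subset_V E by (rule borel_measurable_card_UN_events)
    then show "(\<lambda>\<omega>. real (card (\<Union>i\<in>{i \<in> S. infection_time s par X i \<omega> > tau \<omega>}. N i)))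
        \<in> borel_measurable M"
      by (rule measurable_cong[THEN iffD1, rotated]) (simp add: E_def)
    show "(\<lambda>\<omega>. \<Sum>i\<in>S. real (card (private_descendants S i)) * indicator (E i) \<omega>) \<in> borel_measurable M"
      using E by (intro borel_measurable_sum borel_measurable_times borel_measurable_const
          borel_measurable_indicator) auto
    show "AE \<omega> in M. real (card (\<Union>i\<in>{i \<in> S. infection_time s par X i \<omega> > tau \<omega>}. N i))
        = (\<Sum>i\<in>S. real (card (private_descendants S i)) * indicator (E i) \<omega>)"
      using nonneg AE_space
      by eventually_elim (simp add: card_saved_eq_sum_private[OF assms(2)] E_def indicator_def)
  qed
  also have "\<dots> = (\<Sum>i\<in>S. real (card (private_descendants S i)) * measure M (E i))"
    using \<open>finite S\<close> E by (rule integral_sum_indicator)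
  finally show ?thesis unfolding E_def .
qed

end

theorem theorem1:
  fixes M :: "'w measure" and V :: "'a set" and s :: 'a and par :: "'a \<Rightarrow> 'a"
    and X :: "'a \<Rightarrow> 'w \<Rightarrow> real" and tau :: "'w \<Rightarrow> real" and lam :: real
    and S :: "'a set"
  assumes "prob_space M"
    and "is_rooted_tree V s par"
    and "0 < lam"
    and "\<And>v. v \<in> V - {s} \<Longrightarrow> distributed M lborel (X v) (exponential_density lam)"
    and "tau \<in> borel_measurable M"
    and "\<And>\<omega>. \<omega> \<in> space M \<Longrightarrow> 0 \<le> tau \<omega>"
    and "prob_space.indep_vars M (\<lambda>_. borel)
           (\<lambda>e. case e of None \<Rightarrow> tau | Some v \<Rightarrow> X v) (insert None (Some ` (V - {s})))"
    and "S \<subseteq> V"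
  shows "(\<integral>\<omega>. real (card (\<Union>i\<in>{i \<in> S. infection_time s par X i \<omega> > tau \<omega>}.
                                descendants V s par i)) \<partial>M)
           = (\<Sum>i\<in>S. real (card (descendants V s par i
                 - (\<Union>j\<in>descendants V s par i \<inter> S. descendants V s par j)))
                 * measure M {\<omega> \<in> space M. infection_time s par X i \<omega> > tau \<omega>})
       \<and> (\<integral>\<omega>. real (card (\<Union>i\<in>{i \<in> S. infection_time s par X i \<omega> > tau \<omega>}.
                                descendants V s par i)) \<partial>M)
           = (\<Sum>i\<in>S. (real (card (descendants V s par i))
                 - real (card (\<Union>j\<in>descendants V s par i \<inter> S. descendants V s par j)))
                 * measure M {\<omega> \<in> space M. infection_time s par X i \<omega> > tau \<omega>})"
proof -
  interpret prob_space M by fact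
  interpret rooted_tree V s par by unfold_locales fact
  have "X v \<in> borel_measurable M" if "v \<in> V - {s}" for v
    using distributed_measurable[OF assms(4)[OF that]] by simp
  moreover have "AE \<omega> in M. \<forall>v\<in>V - {s}. 0 \<le> X v \<omega>"
  proof (rule AE_finite_allI)
    show "AE \<omega> in M. 0 \<le> X v \<omega>" if "v \<in> V - {s}" for v
      using exponential_distributed_pos_AE[OF assms(4)[OF that] assms(3)] by eventually_elim simp
  qed (use finite_V in auto)
  ultimately have main: "(\<integral>\<omega>. real (card (\<Union>i\<in>{i \<in> S. infection_time s par X i \<omega> > tau \<omega>}. N i)) \<partial>M)
      = (\<Sum>i\<in>S. real (card (private_descendants S i))
                 * measure M {\<omega> \<in> space M. infection_time s par X i \<omega> > tau \<omega>})"
    using expected_saved_eq_sum_private[OF finite_measure_axioms assms(8)] assms(5) by blast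
  show ?thesis (is "?A \<and> ?B")
  proof
    show "?A" using main unfolding private_descendants_def .
    show "?B" using main unfolding card_private_descendants .
  qed
qed

end
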